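(* Let $Z\subseteq\Sigma^{\mathbb Z}$ be a sofic shift and $(C_1,\dots,C_K)$ a non-redundant graph-induced covering of $Z$. If $\mathcal H_1=(S,E)$ with $S=\{s_1,\dots,s_K\}$ and $\mathcal H_2=(Q,F)$ with $Q=\{q_1,\dots,q_K\}$ are two presentations of it, with $C_j=\mathcal Z(\mathcal H_1,s_j)=\mathcal Z(\mathcal H_2,q_j)$ for all $j$, then for all $j,l$ and $i\in\Sigma$: $(s_j,s_l,i)\in E$ if and only if $(q_j,q_l,i)\in F$. In particular the presentation is unique up to isomorphism.
   Context: $\Sigma$ is a nonempty countable alphabet; $\Sigma^{\mathbb Z}$ the bi-infinite sequences over $\Sigma$, $\sigma(\bar z)_k=z_{k+1}$. A labeled graph is $\mathcal G=(S,E)$ with $S$ finite, $E\subseteq S\times S\times\Sigma$; standing assumption: every node has at least one incoming and one outgoing edge. A bi-infinite walk labeled by $\bar z$ is $(e_k)_{k\in\mathbb Z}$ with $e_k=(s_k,s_{k+1},z_k)\in E$; it starts at $s$ if $s_0=s$. $\mathcal Z(\mathcal G)$ (resp. $\mathcal Z(\mathcal G,s)$) is the set of labels of all bi-infinite walks (resp. those starting at $s$). A sofic shift is a set of the form $\mathcal Z(\mathcal G)$. A graph-induced covering of $Z$ is a family $(C_1,\dots,C_K)$ of subsets of $Z$ such that some graph $\mathcal G$ with nodes $s_1,\dots,s_K$ satisfies $\mathcal Z(\mathcal G)=Z$ and $C_j=\mathcal Z(\mathcal G,s_j)$ (a presentation); it is non-redundant if $C_i\cap C_j=\emptyset$ for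 $i\ne j$. Graphs $(S,E)$, $(Q,F)$ are isomorphic if there is a bijection $\varphi:S\to Q$ with $(s,q,i)\in E\iff(\varphi(s),\varphi(q),i)\in F$. *)

theory Defs
  imports Main "HOL-Library.Countable"
begin

text \<open>A labeled graph is a pair (S, E) of a node set S and an edge set
  E \<subseteq> S \<times> S \<times> \<Sigma>, an edge (s, q, i) going from s to q with label i.\<close>

type_synonym ('s, 'a) lgraph = "'s set \<times> ('s \<times> 's \<times> 'a) set"

definition shift :: "(int \<Rightarrow> 'a) \<Rightarrow> (int \<Rightarrow> 'a)" where
  "shift z = (\<lambda>k. z (k + 1))"

definition is_lgraph :: "('s, 'a) lgraph \<Rightarrow> bool" where
  "is_lgraph G \<longleftrightarrow> finite (fst G) \<and>
     (\<forall>(s, q, i) \<in> snd G. s \<in> fst G \<and> q \<in> fst G) \<and>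
     (\<forall>s \<in> fst G. (\<exists>q i. (q, s, i) \<in> snd G) \<and> (\<exists>q i. (s, q, i) \<in> snd G))"

definition is_walk :: "('s, 'a) lgraph \<Rightarrow> (int \<Rightarrow> 's) \<Rightarrow> (int \<Rightarrow> 'a) \<Rightarrow> bool" where
  "is_walk G st z \<longleftrightarrow> (\<forall>k. (st k, st (k + 1), z k) \<in> snd G)"

definition Zg :: "('s, 'a) lgraph \<Rightarrow> (int \<Rightarrow> 'a) set" where
  "Zg G = {z. \<exists>st. is_walk G st z}"

definition Zgs :: "('s, 'a) lgraph \<Rightarrow> 's \<Rightarrow> (int \<Rightarrow> 'a) set" where
  "Zgs G s = {z. \<exists>st. is_walk G st z \<and> st 0 = s}"

definition sofic :: "(int \<Rightarrow> 'a) set \<Rightarrow> bool" where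
  "sofic Z \<longleftrightarrow> (\<exists>G :: (nat, 'a) lgraph. is_lgraph G \<and> Zg G = Z)"

definition presentation ::
  "(int \<Rightarrow> 'a) set \<Rightarrow> nat \<Rightarrow> (nat \<Rightarrow> (int \<Rightarrow> 'a) set) \<Rightarrow> ('s, 'a) lgraph \<Rightarrow> (nat \<Rightarrow> 's) \<Rightarrow> bool" where
  "presentation Z K C H s \<longleftrightarrow> is_lgraph H \<and> inj_on s {1..K} \<and> fst H = s ` {1..K} \<and>
     Zg H = Z \<and> (\<forall>j \<in> {1..K}. C j = Zgs H (s j))"

definition graph_induced_covering :: "(int \<Rightarrow> 'a) set \<Rightarrow> nat \<Rightarrow> (nat \<Rightarrow> (int \<Rightarrow> 'a) set) \<Rightarrow> bool" where
  "graph_induced_covering Z K C \<longleftrightarrow>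
     (\<exists>(H :: (nat, 'a) lgraph) s. presentation Z K C H s)"

definition non_redundant :: "nat \<Rightarrow> (nat \<Rightarrow> (int \<Rightarrow> 'a) set) \<Rightarrow> bool" where
  "non_redundant K C \<longleftrightarrow> (\<forall>i \<in> {1..K}. \<forall>j \<in> {1..K}. i \<noteq> j \<longrightarrow> C i \<inter> C j = {})"

definition lgraph_iso :: "('s, 'a) lgraph \<Rightarrow> ('t, 'a) lgraph \<Rightarrow> bool" where
  "lgraph_iso G H \<longleftrightarrow> (\<exists>\<phi>. bij_betw \<phi> (fst G) (fst H) \<and>
     (\<forall>s \<in> fst G. \<forall>q \<in> fst G. \<forall>i. (s, q, i) \<in> snd G \<longleftrightarrow> (\<phi> s, \<phi> q, i) \<in> snd H))"

end

theory Submission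
  imports Defs
begin

text \<open>An edge (s_j, s_l, i) of one presentation extends to a bi-infinite walk, because every
  node has an incoming and an outgoing edge. Its label z lies in C_j and its shift in C_l.
  In the other presentation z is read by a walk starting at q_j whose first edge has label i
  and leads to some q_m; then the shift of z lies in C_m as well, so m = l by non-redundancy.
  Hence both presentations have the same edges, and s_j \<mapsto> q_j is an isomorphism.\<close>

definition converse_lgraph :: "('s, 'a) lgraph \<Rightarrow> ('s, 'a) lgraph" where
  "converse_lgraph G = (fst G, {(y, x, c). (x, y, c) \<in> snd G})"

lemma lgraph_edge_nodes:
  assumes "is_lgraph G" and "(x, y, c) \<in> snd G"
  shows "x \<in> fst G" and "y \<in> fst G"
  using assms unfolding is_lgraph_def by fast+

lemma is_lgraph_converse:
  assumes "is_lgraph G"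
  shows "is_lgraph (converse_lgraph G)"
  using assms unfolding is_lgraph_def converse_lgraph_def by auto

lemma lgraph_forward_path:
  assumes G: "is_lgraph G" and b: "b \<in> fst G"
  obtains st :: "nat \<Rightarrow> 's" and z :: "nat \<Rightarrow> 'a"
  where "st 0 = b" and "\<And>n. (st n, st (Suc n), z n) \<in> snd G"
proof -
  have "\<forall>x \<in> fst G. \<exists>y c. (x, y, c) \<in> snd G"
    using G unfolding is_lgraph_def by blast
  then obtain nxt lab where nxt: "\<And>x. x \<in> fst G \<Longrightarrow> (x, nxt x, lab x) \<in> snd G"
    by metis
  define st where "st n = (nxt ^^ n) b" for n
  have st_Suc: "st (Suc n) = nxt (st n)" for n
    by (simp add: st_def)
  have st_node: "st n \<in> fst G" for n
  proof (induction n)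
    case 0
    then show ?case by (simp add: st_def b)
  next
    case (Suc n)
    then show ?case unfolding st_Suc by (rule lgraph_edge_nodes(2)[OF G nxt])
  qed
  show thesis
  proof (rule that)
    show "st 0 = b" by (simp add: st_def)
    show "(st n, st (Suc n), lab (st n)) \<in> snd G" for n
      unfolding st_Suc by (rule nxt[OF st_node])
  qed
qed

lemma lgraph_backward_path:
  assumes G: "is_lgraph G" and a: "a \<in> fst G"
  obtains st :: "nat \<Rightarrow> 's" and z :: "nat \<Rightarrow> 'a"
  where "st 0 = a" and "\<And>n. (st (Suc n), st n, z n) \<in> snd G"
proof -
  have "a \<in> fst (converse_lgraph G)"
    using a by (simp add: converse_lgraph_def)
  then obtain st z where "st 0 = a" and "\<And>n. (st n, st (Suc n), z n) \<in> snd (converse_lgraph G)"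
    by (rule lgraph_forward_path[OF is_lgraph_converse[OF G]]) blast
  then show thesis
    by (intro that[of st z]) (simp_all add: converse_lgraph_def)
qed

text \<open>The walk follows the forward path from b at positions k \<ge> 1 and the backward path
  from a at positions k \<le> 0.\<close>
lemma walk_through_edge:
  assumes G: "is_lgraph G" and e: "(a, b, i) \<in> snd G"
  obtains st z where "is_walk G st z" and "st 0 = a" and "st 1 = b" and "z 0 = i"
proof -
  obtain fw zf where fw0: "fw 0 = b" and fw: "\<And>n. (fw n, fw (Suc n), zf n) \<in> snd G"
    using lgraph_forward_path[OF G lgraph_edge_nodes(2)[OF G e]] by blast
  obtain bw zb where bw0: "bw 0 = a" and bw: "\<And>n. (bw (Suc n), bw n, zb n) \<in> snd G"
    using lgraph_backward_path[OF G lgraph_edge_nodes(1)[OF G e]] by blast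
  define st where "st k = (if k \<ge> 1 then fw (nat (k - 1)) else bw (nat (- k)))" for k :: int
  define z where "z k = (if k \<ge> 1 then zf (nat (k - 1))
                         else if k = 0 then i else zb (nat (- k - 1)))" for k :: int
  have "is_walk G st z"
    unfolding is_walk_def
  proof
    fix k :: int
    consider "k \<ge> 1" | "k = 0" | "k \<le> -1" by linarith
    then show "(st k, st (k + 1), z k) \<in> snd G"
    proof cases
      case 1
      then have "nat k = Suc (nat (k - 1))" by simp
      then show ?thesis using 1 fw[of "nat (k - 1)"] by (simp add: st_def z_def)
    next
      case 2
      then show ?thesis using e fw0 bw0 by (simp add: st_def z_def)
    next
      case 3
      then have "nat (- k) = Suc (nat (- k - 1))" and "nat (- (k + 1)) = nat (- k - 1)" by simp_all
      then show ?thesis using 3 bw[of "nat (- k - 1)"] by (simp add: st_def z_def)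
    qed
  qed
  then show thesis
    by (rule that) (simp_all add: st_def z_def fw0 bw0)
qed

lemma walk_label_in_Zgs:
  assumes "is_walk G st z"
  shows "z \<in> Zgs G (st 0)"
  using assms unfolding Zgs_def by blast

lemma walk_shift:
  assumes "is_walk G st z"
  shows "is_walk G (\<lambda>k. st (k + 1)) (shift z)"
  using assms unfolding is_walk_def shift_def by (metis add.commute add.left_commute)

lemma walk_shift_label_in_Zgs:
  assumes "is_walk G st z"
  shows "shift z \<in> Zgs G (st 1)"
  using walk_label_in_Zgs[OF walk_shift[OF assms]] by simp

lemma presentation_edge_transfer:
  assumes P1: "presentation Z K C H1 s" and P2: "presentation Z K C H2 q"
    and nr: "non_redundant K C" and j: "j \<in> {1..K}" and l: "l \<in> {1..K}"
    and e: "(s j, s l, i) \<in> snd H1"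
  shows "(q j, q l, i) \<in> snd H2"
proof -
  have G1: "is_lgraph H1" and C1: "\<And>j. j \<in> {1..K} \<Longrightarrow> C j = Zgs H1 (s j)"
    using P1 unfolding presentation_def by blast+
  have G2: "is_lgraph H2" and Q: "fst H2 = q ` {1..K}"
    and C2: "\<And>j. j \<in> {1..K} \<Longrightarrow> C j = Zgs H2 (q j)"
    using P2 unfolding presentation_def by blast+
  obtain st z where w: "is_walk H1 st z" and st: "st 0 = s j" "st 1 = s l" and z0: "z 0 = i"
    using walk_through_edge[OF G1 e] .
  have z_Cj: "z \<in> C j"
    using walk_label_in_Zgs[OF w] C1[OF j] st by simp
  have shift_Cl: "shift z \<in> C l"
    using walk_shift_label_in_Zgs[OF w] C1[OF l] st by simp
  obtain st2 where w2: "is_walk H2 st2 z" and st2_0: "st2 0 = q j"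
    using z_Cj C2[OF j] unfolding Zgs_def by blast
  have e2: "(q j, st2 1, i) \<in> snd H2"
    using w2 st2_0 z0 unfolding is_walk_def by (metis add_0)
  obtain m where m: "m \<in> {1..K}" and st2_1: "st2 1 = q m"
    using lgraph_edge_nodes(2)[OF G2 e2] Q by blast
  have "shift z \<in> C m"
    using walk_shift_label_in_Zgs[OF w2] C2[OF m] st2_1 by simp
  with shift_Cl nr m l have "m = l"
    unfolding non_redundant_def by blast
  with e2 st2_1 show ?thesis by simp
qed

lemma lgraph_iso_if_edges_agree:
  assumes s: "inj_on s A" "fst G = s ` A" and q: "inj_on q A" "fst H = q ` A"
    and edges: "\<And>j l i. j \<in> A \<Longrightarrow> l \<in> A \<Longrightarrow> (s j, s l, i) \<in> snd G \<longleftrightarrow> (q j, q l, i) \<in> snd H"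
  shows "lgraph_iso G H"
proof -
  define \<phi> where "\<phi> = q \<circ> inv_into A s"
  have \<phi>_s: "\<phi> (s j) = q j" if "j \<in> A" for j
    using s(1) that by (simp add: \<phi>_def)
  have "bij_betw \<phi> (fst G) (fst H)"
    unfolding \<phi>_def s(2) q(2)
    using bij_betw_inv_into[OF inj_on_imp_bij_betw[OF s(1)]] inj_on_imp_bij_betw[OF q(1)]
    by (rule bij_betw_trans)
  moreover have "\<forall>x \<in> fst G. \<forall>y \<in> fst G. \<forall>i. (x, y, i) \<in> snd G \<longleftrightarrow> (\<phi> x, \<phi> y, i) \<in> snd H"
    using edges \<phi>_s s(2) by auto
  ultimately show ?thesis
    unfolding lgraph_iso_def by blast
qed

theorem mainTheorem4:
  fixes Z :: "(int \<Rightarrow> 'a::countable) set"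
    and K :: nat
    and C :: "nat \<Rightarrow> (int \<Rightarrow> 'a) set"
    and H1 :: "('s, 'a) lgraph" and s :: "nat \<Rightarrow> 's"
    and H2 :: "('q, 'a) lgraph" and q :: "nat \<Rightarrow> 'q"
  assumes "sofic Z"
    and "graph_induced_covering Z K C"
    and "non_redundant K C"
    and "presentation Z K C H1 s"
    and "presentation Z K C H2 q"
  shows "(\<forall>j \<in> {1..K}. \<forall>l \<in> {1..K}. \<forall>i.
            (s j, s l, i) \<in> snd H1 \<longleftrightarrow> (q j, q l, i) \<in> snd H2)
         \<and> lgraph_iso H1 H2"
proof -
  have edges: "(s j, s l, i) \<in> snd H1 \<longleftrightarrow> (q j, q l, i) \<in> snd H2"
    if "j \<in> {1..K}" "l \<in> {1..K}" for j l i
    using presentation_edge_transfer[OF assms(4,5,3) that]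
      presentation_edge_transfer[OF assms(5,4,3) that] by blast
  have "inj_on s {1..K}" "fst H1 = s ` {1..K}" "inj_on q {1..K}" "fst H2 = q ` {1..K}"
    using assms(4,5) unfolding presentation_def by blast+
  then have "lgraph_iso H1 H2"
    using edges by (rule lgraph_iso_if_edges_agree)
  with edges show ?thesis by blast
qed

end
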